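(* A negatively associated, simple point process on $\mathbb{R}^d$ with Radon mean measure is weakly sub-Poisson. A (positively) associated point process on $\mathbb{R}^d$ with Radon, diffuse mean measure is weakly super-Poisson.
   Context: For a point process $\Phi$ with mean measure $\alpha(\cdot)=\mathbb{E}\Phi(\cdot)$ and $k$-th factorial moment measure $\alpha^{(k)}$ (for simple $\Phi$, $\alpha^{(k)}(B_1\times\dots\times B_k)=\mathbb{E}\prod_{i=1}^k\Phi(B_i)$ for pairwise disjoint bounded Borel $B_i$): $\Phi$ is $\nu$-weakly sub-Poisson if $\Pr\{\Phi(B)=0\}\le e^{-\alpha(B)}$ for all bounded Borel $B$; $\alpha$-weakly sub-Poisson if $\alpha^{(k)}(B_1\times\dots\times B_k)\le\prod_{i=1}^k\alpha(B_i)$ for all $k$ and all mutually disjoint bounded Borel $B_1,\dots,B_k$; weakly sub-Poisson if it is both. $\nu$-weakly super-Poisson, $\alpha$-weakly super-Poisson and weakly super-Poisson are defined with the reversed inequalities. $\Phi$ is (positively) associated if $\mathrm{Cov}(f(\Phi(B_1),\dots,\Phi(B_k)),g(\Phi(B_1),\dots,\Phi(B_k)))\ge 0$ for all bounded Borel $B_1,\dots,B_k$ and all continuous increasing $f,g$ with values in $[0,1]$. $\Phi$ is negatively associated if $\mathrm{Cov}(f(\Phi(B_1),\dots,\Phi(B_k)),g(\Phi(B_{k+1}),\dots,\Phi(B_l)))\le 0$ for all bounded Borel $B_1,\dots,B_l$ with $(B_1\cup\dots\cup B_k)\cap(B_{k+1}\cup\dots\cup B_l)=\emptyset$ and all increasing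 $f,g$. *)

theory Defs
  imports "HOL-Probability.Probability"
begin

text \<open>Point processes on R^d (d arbitrary, encoded by a Euclidean space type 'a).\<close>

definition bdd_borel :: "'a::euclidean_space set \<Rightarrow> bool" where
  "bdd_borel B \<longleftrightarrow> B \<in> sets borel \<and> bounded B"

definition point_process :: "'w measure \<Rightarrow> ('w \<Rightarrow> 'a::euclidean_space measure) \<Rightarrow> bool" where
  "point_process M Phi \<longleftrightarrow> prob_space M \<and>
     (\<forall>w\<in>space M. sets (Phi w) = sets borel \<and>
        (\<forall>B. bdd_borel B \<longrightarrow> emeasure (Phi w) B \<in> range of_nat)) \<and>
     (\<forall>B. bdd_borel B \<longrightarrow> (\<lambda>w. emeasure (Phi w) B) \<in> borel_measurable M)"

definition cnt :: "('w \<Rightarrow> 'a measure) \<Rightarrow> 'w \<Rightarrow> 'a set \<Rightarrow> real" where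
  "cnt Phi w B = enn2real (emeasure (Phi w) B)"

definition cnt_vec :: "('w \<Rightarrow> 'a measure) \<Rightarrow> 'w \<Rightarrow> nat \<Rightarrow> (nat \<Rightarrow> 'a set) \<Rightarrow> nat \<Rightarrow> real" where
  "cnt_vec Phi w k B = (\<lambda>i. if i < k then cnt Phi w (B i) else 0)"

definition mean_measure :: "'w measure \<Rightarrow> ('w \<Rightarrow> 'a measure) \<Rightarrow> 'a set \<Rightarrow> ennreal" where
  "mean_measure M Phi B = (\<integral>\<^sup>+ w. emeasure (Phi w) B \<partial>M)"

text \<open>k-th factorial moment measure evaluated on B_0 x ... x B_{k-1}, for pairwise disjoint
  bounded Borel B_i (where it equals E prod Phi(B_i)).\<close>
definition fact_moment :: "'w measure \<Rightarrow> ('w \<Rightarrow> 'a measure) \<Rightarrow> nat \<Rightarrow> (nat \<Rightarrow> 'a set) \<Rightarrow> ennreal" where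
  "fact_moment M Phi k B = (\<integral>\<^sup>+ w. (\<Prod>i<k. emeasure (Phi w) (B i)) \<partial>M)"

definition simple_pp :: "'w measure \<Rightarrow> ('w \<Rightarrow> 'a measure) \<Rightarrow> bool" where
  "simple_pp M Phi \<longleftrightarrow> (AE w in M. \<forall>x. emeasure (Phi w) {x} \<le> 1)"

definition radon_mean :: "'w measure \<Rightarrow> ('w \<Rightarrow> 'a::euclidean_space measure) \<Rightarrow> bool" where
  "radon_mean M Phi \<longleftrightarrow> (\<forall>B. bdd_borel B \<longrightarrow> mean_measure M Phi B < \<top>)"

definition diffuse_mean :: "'w measure \<Rightarrow> ('w \<Rightarrow> 'a measure) \<Rightarrow> bool" where
  "diffuse_mean M Phi \<longleftrightarrow> (\<forall>x. mean_measure M Phi {x} = 0)"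

definition cov :: "'w measure \<Rightarrow> ('w \<Rightarrow> real) \<Rightarrow> ('w \<Rightarrow> real) \<Rightarrow> real" where
  "cov M X Y = (\<integral>w. X w * Y w \<partial>M) - (\<integral>w. X w \<partial>M) * (\<integral>w. Y w \<partial>M)"

text \<open>f : R^k -> R, encoded as a function on nat => real depending only on coordinates < k.\<close>
definition depends_on :: "nat \<Rightarrow> ((nat \<Rightarrow> real) \<Rightarrow> real) \<Rightarrow> bool" where
  "depends_on k f \<longleftrightarrow> (\<forall>x y. (\<forall>i<k. x i = y i) \<longrightarrow> f x = f y)"

definition incr_on :: "nat \<Rightarrow> ((nat \<Rightarrow> real) \<Rightarrow> real) \<Rightarrow> bool" where
  "incr_on k f \<longleftrightarrow> (\<forall>x y. (\<forall>i<k. x i \<le> y i) \<longrightarrow> f x \<le> f y)"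

definition associated :: "'w measure \<Rightarrow> ('w \<Rightarrow> 'a::euclidean_space measure) \<Rightarrow> bool" where
  "associated M Phi \<longleftrightarrow>
    (\<forall>k B f g. (\<forall>i<k. bdd_borel (B i)) \<and>
       depends_on k f \<and> depends_on k g \<and> incr_on k f \<and> incr_on k g \<and>
       continuous_on UNIV f \<and> continuous_on UNIV g \<and>
       (\<forall>x. 0 \<le> f x \<and> f x \<le> 1) \<and> (\<forall>x. 0 \<le> g x \<and> g x \<le> 1) \<longrightarrow>
       cov M (\<lambda>w. f (cnt_vec Phi w k B)) (\<lambda>w. g (cnt_vec Phi w k B)) \<ge> 0)"

definition neg_associated :: "'w measure \<Rightarrow> ('w \<Rightarrow> 'a::euclidean_space measure) \<Rightarrow> bool" where
  "neg_associated M Phi \<longleftrightarrow>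
    (\<forall>k m B C f g. (\<forall>i<k. bdd_borel (B i)) \<and> (\<forall>j<m. bdd_borel (C j)) \<and>
       (\<Union>i<k. B i) \<inter> (\<Union>j<m. C j) = {} \<and>
       depends_on k f \<and> depends_on m g \<and> incr_on k f \<and> incr_on m g \<and>
       integrable M (\<lambda>w. f (cnt_vec Phi w k B)) \<and>
       integrable M (\<lambda>w. g (cnt_vec Phi w m C)) \<and>
       integrable M (\<lambda>w. f (cnt_vec Phi w k B) * g (cnt_vec Phi w m C)) \<longrightarrow>
       cov M (\<lambda>w. f (cnt_vec Phi w k B)) (\<lambda>w. g (cnt_vec Phi w m C)) \<le> 0)"

definition nu_weakly_sub :: "'w measure \<Rightarrow> ('w \<Rightarrow> 'a::euclidean_space measure) \<Rightarrow> bool" where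
  "nu_weakly_sub M Phi \<longleftrightarrow> (\<forall>B. bdd_borel B \<longrightarrow>
     measure M {w \<in> space M. emeasure (Phi w) B = 0} \<le> exp (- enn2real (mean_measure M Phi B)))"

definition nu_weakly_super :: "'w measure \<Rightarrow> ('w \<Rightarrow> 'a::euclidean_space measure) \<Rightarrow> bool" where
  "nu_weakly_super M Phi \<longleftrightarrow> (\<forall>B. bdd_borel B \<longrightarrow>
     measure M {w \<in> space M. emeasure (Phi w) B = 0} \<ge> exp (- enn2real (mean_measure M Phi B)))"

definition alpha_weakly_sub :: "'w measure \<Rightarrow> ('w \<Rightarrow> 'a::euclidean_space measure) \<Rightarrow> bool" where
  "alpha_weakly_sub M Phi \<longleftrightarrow> (\<forall>k B. (\<forall>i<k. bdd_borel (B i)) \<and> disjoint_family_on B {..<k} \<longrightarrow>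
     fact_moment M Phi k B \<le> (\<Prod>i<k. mean_measure M Phi (B i)))"

definition alpha_weakly_super :: "'w measure \<Rightarrow> ('w \<Rightarrow> 'a::euclidean_space measure) \<Rightarrow> bool" where
  "alpha_weakly_super M Phi \<longleftrightarrow> (\<forall>k B. (\<forall>i<k. bdd_borel (B i)) \<and> disjoint_family_on B {..<k} \<longrightarrow>
     fact_moment M Phi k B \<ge> (\<Prod>i<k. mean_measure M Phi (B i)))"

definition weakly_sub_poisson where
  "weakly_sub_poisson M Phi \<longleftrightarrow> nu_weakly_sub M Phi \<and> alpha_weakly_sub M Phi"

definition weakly_super_poisson where
  "weakly_super_poisson M Phi \<longleftrightarrow> nu_weakly_super M Phi \<and> alpha_weakly_super M Phi"

end

theory Submission
  imports Defs
begin

text \<open>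
  For disjoint bounded Borel sets \<open>D\<^sub>1, \<dots>, D\<^sub>m\<close> and a continuous monotone
  \<open>\<phi> : \<real> \<rightarrow> [0, 1]\<close>, negative association gives
  \<open>E \<Prod>\<^sub>j \<phi>(\<Phi> D\<^sub>j) \<le> \<Prod>\<^sub>j E \<phi>(\<Phi> D\<^sub>j)\<close>: split off one factor at a time, the covariance of
  the two (suitably oriented) increasing functions being non-positive. Association gives the reverse
  inequality, without disjointness.

  With \<open>\<phi>(t) = min(n, t)/n\<close> and \<open>n \<rightarrow> \<infinity>\<close> (monotone convergence) this compares the factorial
  moment measure with the product of mean measures. With \<open>\<phi>(t) = 1 - min(1, t)\<close>, which on counts
  is the indicator of emptiness, it compares void probabilities with products over a fine partition of
  \<open>B\<close>. Under negative association,
  \<open>P(\<Phi> B = 0) \<le> \<Prod>\<^sub>j (1 - E min(1, \<Phi> D\<^sub>j)) \<le> exp(- E \<Sum>\<^sub>j min(1, \<Phi> D\<^sub>j))\<close>, and for a simple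
  process the sum equals \<open>\<Phi> B\<close> as soon as the mesh is below the distance between the points of
  \<open>\<Phi>\<close> in \<open>B\<close>. Under association,
  \<open>P(\<Phi> B = 0) \<ge> \<Prod>\<^sub>j (1 - E \<Phi> D\<^sub>j) \<ge> exp(- E \<Phi> B / (1 - \<epsilon>))\<close> whenever every piece has
  mean at most \<open>\<epsilon>\<close>, which a diffuse mean measure allows for every \<open>\<epsilon> > 0\<close>.
\<close>

definition clip :: "real \<Rightarrow> real" where
  "clip t = min 1 (max 0 t)"

definition vacancy :: "real \<Rightarrow> real" where
  "vacancy t = 1 - clip t"

lemma clip_bounds: "0 \<le> clip t" "clip t \<le> 1"
  by (auto simp: clip_def)

lemma vacancy_bounds: "0 \<le> vacancy t" "vacancy t \<le> 1"
  by (auto simp: vacancy_def clip_def)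

lemma mono_clip: "mono clip"
  by (auto simp: mono_def clip_def)

lemma antimono_vacancy: "antimono vacancy"
  by (auto simp: antimono_def vacancy_def clip_def)

lemma continuous_on_clip: "continuous_on A clip"
  unfolding clip_def by (intro continuous_intros)

lemma continuous_on_vacancy: "continuous_on A vacancy"
  unfolding vacancy_def by (intro continuous_intros continuous_on_clip)

lemma continuous_on_clip_div: "continuous_on A (\<lambda>t. clip (t / c))"
  by (intro continuous_on_compose2[OF continuous_on_clip] linear_continuous_on bounded_linear_divide) auto

lemma mono_clip_div: "0 \<le> c \<Longrightarrow> mono (\<lambda>t. clip (t / c))"
  by (auto simp: mono_def intro!: monoD[OF mono_clip] divide_right_mono)

lemma clip_of_nat: "clip (real n) = (if n = 0 then 0 else 1)"
  by (auto simp: clip_def)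

lemma vacancy_of_nat: "vacancy (real n) = (if n = 0 then 1 else 0)"
  by (simp add: vacancy_def clip_of_nat)

lemma vacancy_sum_Nats:
  assumes "finite J" "\<And>j. j \<in> J \<Longrightarrow> x j \<in> \<nat>"
  shows "vacancy (\<Sum>j\<in>J. x j) = (\<Prod>j\<in>J. vacancy (x j))"
proof (cases "\<forall>j\<in>J. x j = 0")
  case True
  then show ?thesis by (simp add: vacancy_def clip_def)
next
  case False
  have nat: "\<exists>n::nat. x j = real n" if "j \<in> J" for j
    using assms(2)[OF that] by (cases rule: Nats_cases) auto
  with False obtain i where i: "i \<in> J" "1 \<le> x i"
    by fastforce
  have "0 \<le> x j" if "j \<in> J" for j
    using nat[OF that] by auto
  then have "x i \<le> (\<Sum>j\<in>J. x j)"
    using assms(1) i by (intro member_le_sum) auto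
  then show ?thesis
    using i assms(1) by (auto simp: vacancy_def clip_def intro!: prod_zero bexI[of _ i])
qed

lemma vacancy_ge_one_minus: "0 \<le> t \<Longrightarrow> 1 - t \<le> vacancy t"
  by (auto simp: vacancy_def clip_def)

lemma min_of_nat_eq_mult_clip: "0 \<le> t \<Longrightarrow> min (real n) t = real n * clip (t / real n)"
  by (cases "n = 0") (auto simp: clip_def min_def field_simps)

lemma exp_neg_div_le_one_minus:
  fixes e eps :: real
  assumes "0 \<le> e" "e \<le> eps" "eps < 1"
  shows "exp (- e / (1 - eps)) \<le> 1 - e"
proof -
  have pos: "0 < 1 - e" using assms by linarith
  have "- ln (1 - e) = ln (inverse (1 - e))" using pos by (simp add: ln_inverse)
  also have "\<dots> \<le> inverse (1 - e) - 1" using pos by (intro ln_le_minus_one) simp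
  also have "\<dots> = e / (1 - e)" using pos by (simp add: field_simps)
  also have "\<dots> \<le> e / (1 - eps)" using assms pos by (intro divide_left_mono) auto
  finally have "exp (- e / (1 - eps)) \<le> exp (ln (1 - e))" by simp
  then show ?thesis using pos by simp
qed

lemma SUP_mult_incseq_ennreal:
  fixes f g :: "nat \<Rightarrow> ennreal"
  assumes "incseq f" "incseq g"
  shows "(SUP n. f n * g n) = (SUP n. f n) * (SUP n. g n)"
proof (rule antisym)
  show "(SUP n. f n * g n) \<le> (SUP n. f n) * (SUP n. g n)"
    by (intro SUP_least mult_mono SUP_upper) auto
  have "f i * g j \<le> (SUP n. f n * g n)" for i j
  proof -
    have "f i * g j \<le> f (max i j) * g (max i j)"
      using assms by (intro mult_mono) (auto simp: incseq_def)
    also have "\<dots> \<le> (SUP n. f n * g n)" by (rule SUP_upper) simp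
    finally show ?thesis .
  qed
  then show "(SUP n. f n) * (SUP n. g n) \<le> (SUP n. f n * g n)"
    by (simp add: SUP_mult_left_ennreal SUP_mult_right_ennreal SUP_least)
qed

lemma prod_SUP_incseq_ennreal:
  fixes f :: "'i \<Rightarrow> nat \<Rightarrow> ennreal"
  assumes "finite I" "\<And>i. i \<in> I \<Longrightarrow> incseq (f i)"
  shows "(\<Prod>i\<in>I. SUP n. f i n) = (SUP n. \<Prod>i\<in>I. f i n)"
  using assms
proof (induction I rule: finite_induct)
  case empty
  then show ?case by simp
next
  case (insert i I)
  have "incseq (\<lambda>n. \<Prod>j\<in>I. f j n)"
    using insert.prems by (auto simp: incseq_def intro!: prod_mono_ennreal)
  with insert show ?case by (simp add: SUP_mult_incseq_ennreal)
qed

lemma SUP_min_of_nat_ennreal: "0 \<le> t \<Longrightarrow> (SUP n. ennreal (min (real n) t)) = ennreal t"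
proof (rule antisym)
  show "(SUP n. ennreal (min (real n) t)) \<le> ennreal t" by (intro SUP_least ennreal_leI) auto
  obtain n :: nat where "t \<le> real n" using real_arch_simple by blast
  then have "ennreal t = ennreal (min (real n) t)" by simp
  also have "\<dots> \<le> (SUP n. ennreal (min (real n) t))" by (rule SUP_upper) simp
  finally show "ennreal t \<le> (SUP n. ennreal (min (real n) t))" .
qed

lemma incseq_min_of_nat_ennreal: "incseq (\<lambda>n. ennreal (min (real n) t))"
  by (auto simp: incseq_def intro!: ennreal_leI)

section \<open>Partitions into small balls\<close>

lemma INT_ball_inverse_Suc: "(\<Inter>n. ball x (inverse (real (Suc n)))) = {x}"
proof -
  have "y = x" if y: "\<forall>n. dist x y < inverse (real (Suc n))" for y :: 'a
  proof (rule ccontr)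
    assume "y \<noteq> x"
    then obtain n where "inverse (real (Suc n)) < dist x y"
      using reals_Archimedean[of "dist x y"] by auto
    with y show False by (meson not_less_iff_gr_or_eq)
  qed
  then show ?thesis by auto
qed

lemma uniform_radius:
  fixes K :: "'a::metric_space set"
  assumes "compact K" and local: "\<And>x. x \<in> K \<Longrightarrow> \<exists>r>0. P (ball x r)"
    and antimono_P: "\<And>x r y s. P (ball x r) \<Longrightarrow> ball y s \<subseteq> ball x r \<Longrightarrow> P (ball y s)"
  shows "\<exists>\<delta>>0. \<forall>y\<in>K. P (ball y \<delta>)"
proof -
  obtain r where r: "\<And>x. x \<in> K \<Longrightarrow> r x > 0 \<and> P (ball x (r x))"
    using local by metis
  have "K \<subseteq> \<Union>((\<lambda>x. ball x (r x)) ` K)" using r by force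
  then obtain \<delta> where "0 < \<delta>" "\<And>y. y \<in> K \<Longrightarrow> \<exists>G\<in>(\<lambda>x. ball x (r x)) ` K. ball y \<delta> \<subseteq> G"
    by (rule Heine_Borel_lemma[OF \<open>compact K\<close>]) auto
  moreover have "P (ball y \<delta>)" if "y \<in> K" "x \<in> K" "ball y \<delta> \<subseteq> ball x (r x)" for x y
    using antimono_P r that by metis
  ultimately show ?thesis by blast
qed

definition ball_partition :: "'a::metric_space set \<Rightarrow> real \<Rightarrow> nat \<Rightarrow> (nat \<Rightarrow> 'a) \<Rightarrow> (nat \<Rightarrow> 'a set) \<Rightarrow> bool" where
  "ball_partition B \<delta> m c D \<longleftrightarrow> disjoint_family_on D {..<m} \<and> (\<Union>j<m. D j) = B \<and>
     (\<forall>j<m. D j \<in> sets borel \<and> D j \<subseteq> B \<inter> ball (c j) \<delta> \<and> c j \<in> closure B)"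

lemma ball_partition_exists:
  fixes B :: "'a::heine_borel set"
  assumes "bounded B" "B \<in> sets borel" "0 < \<delta>"
  shows "\<exists>m c D. ball_partition B \<delta> m c D"
proof -
  have "compact (closure B)" using assms(1) by (simp add: compact_closure)
  moreover have "closure B \<subseteq> (\<Union>c\<in>closure B. ball c \<delta>)" using assms(3) by auto
  ultimately obtain K where K: "K \<subseteq> closure B" "finite K" "closure B \<subseteq> (\<Union>c\<in>K. ball c \<delta>)"
    by (metis compactE_image open_ball)
  obtain cs where cs: "set cs = K" using K(2) finite_list by blast
  define m where "m = length cs"
  define A where "A j = B \<inter> ball (cs ! j) \<delta>" for j
  have c: "cs ! j \<in> closure B" if "j < m" for j using that cs K(1) unfolding m_def by auto
  have A: "A j \<in> sets borel" for j using assms(2) unfolding A_def by auto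
  have "(\<Union>j<m. disjointed A j) = (\<Union>j<m. A j)"
    by (simp only: lessThan_atLeast0 finite_UN_disjointed_eq)
  also have "\<dots> = B"
  proof
    show "B \<subseteq> (\<Union>j<m. A j)"
    proof
      fix x assume x: "x \<in> B"
      then obtain c where "c \<in> set cs" "x \<in> ball c \<delta>" using K(3) closure_subset cs by blast
      then obtain j where "j < m" "x \<in> ball (cs ! j) \<delta>" unfolding m_def by (metis in_set_conv_nth)
      with x show "x \<in> (\<Union>j<m. A j)" unfolding A_def by auto
    qed
  qed (auto simp: A_def)
  finally have "(\<Union>j<m. disjointed A j) = B" .
  moreover have "disjointed A j \<in> sets borel" for j
    using sets.range_disjointed_sets[of A borel] A by auto
  moreover have "disjointed A j \<subseteq> B \<inter> ball (cs ! j) \<delta>" for j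
    using disjointed_subset[of A j] unfolding A_def .
  ultimately show ?thesis
    unfolding ball_partition_def
    using disjoint_family_on_mono[OF subset_UNIV disjoint_family_disjointed[of A]] c by blast
qed

lemma bdd_borel_subset: "bdd_borel B \<Longrightarrow> D \<in> sets borel \<Longrightarrow> D \<subseteq> B \<Longrightarrow> bdd_borel D"
  unfolding bdd_borel_def using bounded_subset by blast

lemma bdd_borel_Int: "bdd_borel B \<Longrightarrow> S \<in> sets borel \<Longrightarrow> bdd_borel (B \<inter> S)"
  unfolding bdd_borel_def using bounded_Int by blast

lemma bdd_borel_UN: "(\<And>j. j < m \<Longrightarrow> bdd_borel (D j)) \<Longrightarrow> bdd_borel (\<Union>j<(m::nat). D j)"
  unfolding bdd_borel_def by (intro conjI sets.finite_UN bounded_UN) auto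

lemma ball_partition_bdd_borel:
  "bdd_borel B \<Longrightarrow> ball_partition B \<delta> m c D \<Longrightarrow> j < m \<Longrightarrow> bdd_borel (D j)"
  unfolding ball_partition_def by (auto intro: bdd_borel_subset)

lemma incr_on_prod:
  fixes \<phi> :: "real \<Rightarrow> real"
  assumes "mono \<phi>" "\<And>t. 0 \<le> \<phi> t" "m \<le> k"
  shows "incr_on k (\<lambda>x. \<Prod>j<m. \<phi> (x j))"
  using assms unfolding incr_on_def by (auto intro!: prod_mono monoD[of \<phi>])

lemma incr_on_one_minus_prod:
  fixes \<phi> :: "real \<Rightarrow> real"
  assumes "antimono \<phi>" "\<And>t. 0 \<le> \<phi> t" "m \<le> k"
  shows "incr_on k (\<lambda>x. 1 - (\<Prod>j<m. \<phi> (x j)))"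
  using assms unfolding incr_on_def by (auto intro!: prod_mono antimonoD[of \<phi>])

lemma depends_on_prod:
  fixes \<phi> :: "real \<Rightarrow> real"
  shows "m \<le> k \<Longrightarrow> depends_on k (\<lambda>x. h (\<Prod>j<m. \<phi> (x j)))"
  unfolding depends_on_def by (auto intro!: arg_cong[where f = h] prod.cong)

lemma continuous_on_prod_coordinates:
  fixes \<phi> :: "real \<Rightarrow> real"
  assumes "continuous_on UNIV \<phi>"
  shows "continuous_on UNIV (\<lambda>x::nat \<Rightarrow> real. \<Prod>j\<in>J. \<phi> (x j))"
proof (intro continuous_on_prod)
  fix j
  have "continuous_on UNIV (\<lambda>x::nat \<Rightarrow> real. x j)" by simp
  then show "continuous_on UNIV (\<lambda>x::nat \<Rightarrow> real. \<phi> (x j))"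
    by (rule continuous_on_compose2[OF assms]) simp
qed

lemma prod_unit_interval:
  fixes \<phi> :: "real \<Rightarrow> real"
  assumes "\<And>t. 0 \<le> \<phi> t \<and> \<phi> t \<le> 1"
  shows "0 \<le> (\<Prod>j\<in>J. \<phi> (x j))" "(\<Prod>j\<in>J. \<phi> (x j)) \<le> 1"
  using assms by (auto intro: prod_nonneg prod_le_1)

lemma (in prob_space) cov_one_minus:
  assumes "integrable M F" "integrable M G" "integrable M (\<lambda>w. F w * G w)"
  shows "cov M (\<lambda>w. 1 - F w) (\<lambda>w. 1 - G w) = cov M F G"
proof -
  have "(\<lambda>w. (1 - F w) * (1 - G w)) = (\<lambda>w. 1 - F w - G w + F w * G w)"
    by (simp add: algebra_simps)
  then show ?thesis
    using assms by (simp add: cov_def prob_space algebra_simps)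
qed

section \<open>Counts of a point process\<close>

lemma cnt_nonneg [simp]: "0 \<le> cnt Phi w B"
  by (simp add: cnt_def)

locale point_process_space =
  fixes M :: "'w measure" and Phi :: "'w \<Rightarrow> 'a::euclidean_space measure"
  assumes point_process: "point_process M Phi"
begin

sublocale prob_space M
  using point_process by (simp add: point_process_def)

lemma sets_Phi: "w \<in> space M \<Longrightarrow> sets (Phi w) = sets borel"
  using point_process by (simp add: point_process_def)

lemma emeasure_Phi_of_nat:
  assumes "bdd_borel B" "w \<in> space M"
  obtains n :: nat where "emeasure (Phi w) B = of_nat n" "cnt Phi w B = real n"
proof -
  obtain n :: nat where "emeasure (Phi w) B = of_nat n"
    using point_process assms unfolding point_process_def by blast
  then show ?thesis by (intro that) (simp_all add: cnt_def)
qed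

lemma cnt_in_Nats: "bdd_borel B \<Longrightarrow> w \<in> space M \<Longrightarrow> cnt Phi w B \<in> \<nat>"
  by (metis emeasure_Phi_of_nat of_nat_in_Nats)

lemma emeasure_Phi_eq_cnt:
  "bdd_borel B \<Longrightarrow> w \<in> space M \<Longrightarrow> emeasure (Phi w) B = ennreal (cnt Phi w B)"
  by (metis emeasure_Phi_of_nat ennreal_of_nat_eq_real_of_nat)

lemma borel_measurable_cnt [measurable]: "bdd_borel B \<Longrightarrow> (\<lambda>w. cnt Phi w B) \<in> borel_measurable M"
  using point_process unfolding point_process_def cnt_def by (simp add: borel_measurable_enn2real)

lemma borel_measurable_cnt_vec:
  "(\<And>i. i < k \<Longrightarrow> bdd_borel (B i)) \<Longrightarrow> (\<lambda>w. cnt_vec Phi w k B) \<in> borel_measurable M"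
  unfolding cnt_vec_def
  by (intro measurable_coordinatewise_then_product, case_tac "i < k") auto

lemma cnt_mono:
  assumes "bdd_borel B" "D \<in> sets borel" "D \<subseteq> B" "w \<in> space M"
  shows "cnt Phi w D \<le> cnt Phi w B"
proof -
  have "emeasure (Phi w) D \<le> emeasure (Phi w) B"
    using assms by (intro emeasure_mono) (auto simp: sets_Phi bdd_borel_def)
  then show ?thesis
    using assms bdd_borel_subset[OF assms(1-3)] by (simp add: emeasure_Phi_eq_cnt)
qed

lemma cnt_UN_disjoint:
  fixes m :: nat
  assumes "disjoint_family_on D {..<m}" "\<And>j. j < m \<Longrightarrow> bdd_borel (D j)" "w \<in> space M"
  shows "cnt Phi w (\<Union>j<m. D j) = (\<Sum>j<m. cnt Phi w (D j))"
proof -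
  have "bdd_borel (\<Union>j<m. D j)"
    using assms(2) by (rule bdd_borel_UN)
  moreover have "emeasure (Phi w) (\<Union>j<m. D j) = (\<Sum>j<m. emeasure (Phi w) (D j))"
    using assms by (intro sum_emeasure[symmetric]) (auto simp: sets_Phi bdd_borel_def)
  ultimately show ?thesis
    using assms by (simp add: emeasure_Phi_eq_cnt sum_ennreal sum_nonneg)
qed

lemma vacancy_cnt_UN_disjoint:
  fixes m :: nat
  assumes "disjoint_family_on D {..<m}" "\<And>j. j < m \<Longrightarrow> bdd_borel (D j)" "w \<in> space M"
  shows "vacancy (cnt Phi w (\<Union>j<m. D j)) = (\<Prod>j<m. vacancy (cnt Phi w (D j)))"
  using assms by (subst cnt_UN_disjoint[OF assms]) (auto intro!: vacancy_sum_Nats cnt_in_Nats)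

lemma cnt_ball_partition:
  "bdd_borel B \<Longrightarrow> ball_partition B \<delta> m c D \<Longrightarrow> w \<in> space M \<Longrightarrow> cnt Phi w B = (\<Sum>j<m. cnt Phi w (D j))"
  using cnt_UN_disjoint[of D m w] ball_partition_bdd_borel[of B \<delta> m c D]
  unfolding ball_partition_def by metis

lemma mean_measure_eq_nn_integral:
  "bdd_borel B \<Longrightarrow> mean_measure M Phi B = (\<integral>\<^sup>+ w. ennreal (cnt Phi w B) \<partial>M)"
  unfolding mean_measure_def by (intro nn_integral_cong) (simp add: emeasure_Phi_eq_cnt)

lemma integrable_cnt: "radon_mean M Phi \<Longrightarrow> bdd_borel B \<Longrightarrow> integrable M (\<lambda>w. cnt Phi w B)"
  by (intro integrableI_nonneg) (auto simp: radon_mean_def mean_measure_eq_nn_integral[symmetric])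

lemma enn2real_mean_measure:
  "radon_mean M Phi \<Longrightarrow> bdd_borel B \<Longrightarrow> enn2real (mean_measure M Phi B) = expectation (\<lambda>w. cnt Phi w B)"
  by (simp add: mean_measure_eq_nn_integral integrable_cnt nn_integral_eq_integral)

lemma integrable_prod_cnt:
  fixes \<phi> :: "real \<Rightarrow> real"
  assumes "\<And>j. j \<in> J \<Longrightarrow> bdd_borel (D j)" "continuous_on UNIV \<phi>" "\<And>t. 0 \<le> \<phi> t \<and> \<phi> t \<le> 1"
  shows "integrable M (\<lambda>w. \<Prod>j\<in>J. \<phi> (cnt Phi w (D j)))"
proof (rule integrable_const_bound[where B = 1])
  have "\<phi> \<in> borel_measurable borel"
    using assms(2) by (rule borel_measurable_continuous_onI)
  then show "(\<lambda>w. \<Prod>j\<in>J. \<phi> (cnt Phi w (D j))) \<in> borel_measurable M"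
    using assms(1) by (intro borel_measurable_prod) (auto intro: measurable_compose[OF borel_measurable_cnt])
  show "AE w in M. norm (\<Prod>j\<in>J. \<phi> (cnt Phi w (D j))) \<le> 1"
  proof (rule AE_I2)
    fix w
    show "norm (\<Prod>j\<in>J. \<phi> (cnt Phi w (D j))) \<le> 1"
      using prod_unit_interval[of \<phi> "\<lambda>j. cnt Phi w (D j)" J, OF assms(3)] by (simp add: abs_of_nonneg)
  qed
qed

lemma integrable_comp_cnt:
  fixes \<phi> :: "real \<Rightarrow> real"
  assumes "bdd_borel B" "continuous_on UNIV \<phi>" "\<And>t. 0 \<le> \<phi> t \<and> \<phi> t \<le> 1"
  shows "integrable M (\<lambda>w. \<phi> (cnt Phi w B))"
  using integrable_prod_cnt[of "{0::nat}" "\<lambda>_. B", OF _ assms(2,3)] assms(1) by simp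

lemma prob_void_eq_expectation_vacancy:
  assumes "bdd_borel B"
  shows "prob {w \<in> space M. emeasure (Phi w) B = 0} = expectation (\<lambda>w. vacancy (cnt Phi w B))"
proof -
  have "vacancy (cnt Phi w B) = indicator {w \<in> space M. emeasure (Phi w) B = 0} w" if "w \<in> space M" for w
    using emeasure_Phi_of_nat[OF assms that]
    by (metis (mono_tags, lifting) indicator_simps mem_Collect_eq of_nat_eq_0_iff that vacancy_of_nat)
  then show ?thesis
    using assms by (simp add: Int_absorb2 cong: Bochner_Integration.integral_cong)
qed

lemma expectation_vacancy_cnt:
  "bdd_borel D \<Longrightarrow> expectation (\<lambda>w. vacancy (cnt Phi w D)) = 1 - expectation (\<lambda>w. clip (cnt Phi w D))"
  unfolding vacancy_def
  by (simp add: integrable_comp_cnt continuous_on_clip clip_bounds prob_space)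

lemma expectation_vacancy_ge:
  assumes r: "radon_mean M Phi" and D: "bdd_borel D"
  shows "1 - expectation (\<lambda>w. cnt Phi w D) \<le> expectation (\<lambda>w. vacancy (cnt Phi w D))"
proof -
  have "1 - expectation (\<lambda>w. cnt Phi w D) = expectation (\<lambda>w. 1 - cnt Phi w D)"
    using integrable_cnt[OF r D] by (simp add: prob_space)
  also have "\<dots> \<le> expectation (\<lambda>w. vacancy (cnt Phi w D))"
    using integrable_cnt[OF r D] D
    by (intro integral_mono) (auto intro: vacancy_ge_one_minus integrable_comp_cnt
        simp: continuous_on_vacancy vacancy_bounds)
  finally show ?thesis .
qed

lemma cnt_Int_ball_tendsto:
  assumes B: "bdd_borel B" and w: "w \<in> space M"
  shows "(\<lambda>n. cnt Phi w (B \<inter> ball x (inverse (real (Suc n))))) \<longlonglongrightarrow> cnt Phi w (B \<inter> {x})"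
proof -
  define A where "A n = B \<inter> ball x (inverse (real (Suc n)))" for n
  have A: "bdd_borel (A n)" for n unfolding A_def using B by (simp add: bdd_borel_Int)
  have "inverse (real (Suc n)) \<le> inverse (real (Suc k))" if "k \<le> n" for k n
    using that by (simp add: le_imp_inverse_le)
  then have "decseq A"
    unfolding decseq_def A_def by (meson Int_mono order_refl subset_ball)
  moreover have "range A \<subseteq> sets (Phi w)" using A w by (auto simp: sets_Phi bdd_borel_def)
  ultimately have "(\<lambda>n. emeasure (Phi w) (A n)) \<longlonglongrightarrow> emeasure (Phi w) (\<Inter>n. A n)"
    using A w by (intro Lim_emeasure_decseq) (auto simp: emeasure_Phi_eq_cnt)
  moreover have "(\<Inter>n. A n) = B \<inter> {x}"
    using INT_ball_inverse_Suc[of x] unfolding A_def by blast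
  ultimately show ?thesis
    using A w B by (simp add: A_def emeasure_Phi_eq_cnt bdd_borel_Int)
qed

lemma expectation_cnt_Int_ball_tendsto:
  assumes r: "radon_mean M Phi" and B: "bdd_borel B"
  shows "(\<lambda>n. expectation (\<lambda>w. cnt Phi w (B \<inter> ball x (inverse (real (Suc n))))))
           \<longlonglongrightarrow> expectation (\<lambda>w. cnt Phi w (B \<inter> {x}))"
proof (rule integral_dominated_convergence[where w = "\<lambda>w. cnt Phi w B"])
  show "integrable M (\<lambda>w. cnt Phi w B)" using r B by (rule integrable_cnt)
  show "AE w in M. (\<lambda>n. cnt Phi w (B \<inter> ball x (inverse (real (Suc n))))) \<longlonglongrightarrow> cnt Phi w (B \<inter> {x})"
    using cnt_Int_ball_tendsto[OF B] by simp
  show "AE w in M. norm (cnt Phi w (B \<inter> ball x (inverse (real (Suc n))))) \<le> cnt Phi w B" for n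
    using B by (auto simp: bdd_borel_def intro!: cnt_mono)
qed (use B in \<open>auto simp: bdd_borel_Int\<close>)

section \<open>Product inequalities under (negative) association\<close>

lemma cov_one_minus_prod_cnt:
  fixes \<phi> :: "real \<Rightarrow> real" and m :: nat
  assumes "\<And>j. j \<le> m \<Longrightarrow> bdd_borel (D j)" "continuous_on UNIV \<phi>" "\<And>t. 0 \<le> \<phi> t \<and> \<phi> t \<le> 1"
  shows "cov M (\<lambda>w. 1 - (\<Prod>j<m. \<phi> (cnt Phi w (D j)))) (\<lambda>w. 1 - \<phi> (cnt Phi w (D m)))
       = cov M (\<lambda>w. \<Prod>j<m. \<phi> (cnt Phi w (D j))) (\<lambda>w. \<phi> (cnt Phi w (D m)))"
proof -
  have "integrable M (\<lambda>w. \<Prod>j<m. \<phi> (cnt Phi w (D j)))" "integrable M (\<lambda>w. \<phi> (cnt Phi w (D m)))"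
    "integrable M (\<lambda>w. (\<Prod>j<m. \<phi> (cnt Phi w (D j))) * \<phi> (cnt Phi w (D m)))"
    using integrable_prod_cnt[OF _ assms(2,3), of "{..<m}" D] integrable_prod_cnt[OF _ assms(2,3), of "{m}" D]
      integrable_prod_cnt[OF _ assms(2,3), of "{..<Suc m}" D] assms(1)
    by simp_all
  then show ?thesis by (rule cov_one_minus)
qed

lemma neg_associated_cov_le:
  assumes na: "neg_associated M Phi"
    and B: "\<And>i. i < k \<Longrightarrow> bdd_borel (B i)" and C: "bdd_borel C" and disj: "C \<inter> (\<Union>i<k. B i) = {}"
    and f: "depends_on k f" "incr_on k f" "continuous_on UNIV f" "\<And>x. 0 \<le> f x \<and> f x \<le> 1"
    and g: "mono g" "continuous_on UNIV g" "\<And>t. 0 \<le> g t \<and> g t \<le> 1"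
  shows "cov M (\<lambda>w. f (cnt_vec Phi w k B)) (\<lambda>w. g (cnt Phi w C)) \<le> 0"
proof -
  define g' where "g' x = g (x (0::nat))" for x :: "nat \<Rightarrow> real"
  have g': "g' (cnt_vec Phi w 1 (\<lambda>_. C)) = g (cnt Phi w C)" for w
    by (simp add: g'_def cnt_vec_def)
  have F: "(\<lambda>w. f (cnt_vec Phi w k B)) \<in> borel_measurable M"
    using borel_measurable_cnt_vec[OF B] f(3) by (rule measurable_compose[OF _ borel_measurable_continuous_onI])
  have G: "(\<lambda>w. g (cnt Phi w C)) \<in> borel_measurable M"
    using borel_measurable_cnt[OF C] g(2) by (rule measurable_compose[OF _ borel_measurable_continuous_onI])
  have "\<bar>f x * g t\<bar> \<le> 1" for x t
    using f(4)[of x] g(3)[of t] by (simp add: abs_mult mult_le_one)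
  then have "integrable M (\<lambda>w. f (cnt_vec Phi w k B))" "integrable M (\<lambda>w. g (cnt Phi w C))"
    "integrable M (\<lambda>w. f (cnt_vec Phi w k B) * g (cnt Phi w C))"
    using F G f(4) g(3) by (auto intro!: integrable_const_bound[where B = 1])
  moreover have "depends_on 1 g'" "incr_on 1 g'"
    using g(1) by (auto simp: depends_on_def incr_on_def g'_def mono_def)
  ultimately have "cov M (\<lambda>w. f (cnt_vec Phi w k B)) (\<lambda>w. g' (cnt_vec Phi w 1 (\<lambda>_. C))) \<le> 0"
    using na[unfolded neg_associated_def, rule_format, of k B 1 "\<lambda>_. C" f g'] B C disj f
    unfolding g' by blast
  then show ?thesis unfolding g' .
qed

lemma neg_associated_cov_prod_le:
  fixes \<phi> :: "real \<Rightarrow> real" and m :: nat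
  assumes na: "neg_associated M Phi"
    and D: "\<And>j. j \<le> m \<Longrightarrow> bdd_borel (D j)" "\<And>j. j < m \<Longrightarrow> D m \<inter> D j = {}"
    and \<phi>: "continuous_on UNIV \<phi>" "\<And>t. 0 \<le> \<phi> t \<and> \<phi> t \<le> 1" "mono \<phi> \<or> antimono \<phi>"
  shows "cov M (\<lambda>w. \<Prod>j<m. \<phi> (cnt Phi w (D j))) (\<lambda>w. \<phi> (cnt Phi w (D m))) \<le> 0"
proof -
  define F where "F = (\<lambda>w. \<Prod>j<m. \<phi> (cnt Phi w (D j)))"
  define G where "G = (\<lambda>w. \<phi> (cnt Phi w (D m)))"
  have B: "\<And>j. j < m \<Longrightarrow> bdd_borel (D j)" and C: "bdd_borel (D m)" and disj: "D m \<inter> (\<Union>j<m. D j) = {}"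
    using D by auto
  have F: "F = (\<lambda>w. (\<lambda>x. \<Prod>j<m. \<phi> (x j)) (cnt_vec Phi w m D))"
    by (simp add: F_def cnt_vec_def)
  have bounds: "0 \<le> (\<Prod>j<m. \<phi> (x j))" "(\<Prod>j<m. \<phi> (x j)) \<le> 1" for x
    by (rule prod_unit_interval[of \<phi>, OF \<phi>(2)])+
  have "cov M F G \<le> 0"
    using \<phi>(3)
  proof
    assume "mono \<phi>"
    then have "cov M (\<lambda>w. (\<lambda>x. \<Prod>j<m. \<phi> (x j)) (cnt_vec Phi w m D)) G \<le> 0"
      unfolding G_def using B C disj \<phi> bounds
      by (intro neg_associated_cov_le[OF na] incr_on_prod depends_on_prod continuous_on_prod_coordinates)
        auto
    then show ?thesis by (simp only: F)
  next
    assume "antimono \<phi>"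
    have "continuous_on UNIV (\<lambda>x. 1 - (\<Prod>j<m. \<phi> (x j)))" "continuous_on UNIV (\<lambda>t. 1 - \<phi> t)"
      by (intro continuous_on_diff continuous_on_const continuous_on_prod_coordinates \<phi>(1))+
    with \<open>antimono \<phi>\<close> have "cov M (\<lambda>w. (\<lambda>x. 1 - (\<Prod>j<m. \<phi> (x j))) (cnt_vec Phi w m D)) (\<lambda>w. 1 - G w) \<le> 0"
      unfolding G_def using B C disj \<phi> bounds
      by (intro neg_associated_cov_le[OF na] incr_on_one_minus_prod depends_on_prod)
        (auto simp: antimono_def mono_def)
    then have "cov M (\<lambda>w. 1 - F w) (\<lambda>w. 1 - G w) \<le> 0" by (simp only: F)
    moreover have "cov M (\<lambda>w. 1 - F w) (\<lambda>w. 1 - G w) = cov M F G"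
      unfolding F_def G_def by (rule cov_one_minus_prod_cnt[OF D(1) \<phi>(1,2)])
    ultimately show ?thesis by simp
  qed
  then show ?thesis by (simp only: F_def G_def)
qed

lemma neg_associated_expectation_prod_le:
  fixes \<phi> :: "real \<Rightarrow> real" and m :: nat
  assumes na: "neg_associated M Phi"
    and "disjoint_family_on D {..<m}" "\<And>j. j < m \<Longrightarrow> bdd_borel (D j)"
    and \<phi>: "continuous_on UNIV \<phi>" "\<And>t. 0 \<le> \<phi> t \<and> \<phi> t \<le> 1" "mono \<phi> \<or> antimono \<phi>"
  shows "expectation (\<lambda>w. \<Prod>j<m. \<phi> (cnt Phi w (D j))) \<le> (\<Prod>j<m. expectation (\<lambda>w. \<phi> (cnt Phi w (D j))))"
  using assms(2,3)
proof (induction m)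
  case 0
  then show ?case by (simp add: prob_space)
next
  case (Suc m)
  have "D m \<inter> D j = {}" if "j < m" for j
    using disjoint_family_onD[OF Suc.prems(1)] that by simp
  then have "cov M (\<lambda>w. \<Prod>j<m. \<phi> (cnt Phi w (D j))) (\<lambda>w. \<phi> (cnt Phi w (D m))) \<le> 0"
    using Suc.prems(2) by (intro neg_associated_cov_prod_le[OF na _ _ \<phi>]) auto
  then have "expectation (\<lambda>w. \<Prod>j<Suc m. \<phi> (cnt Phi w (D j)))
      \<le> expectation (\<lambda>w. \<Prod>j<m. \<phi> (cnt Phi w (D j))) * expectation (\<lambda>w. \<phi> (cnt Phi w (D m)))"
    by (simp add: cov_def)
  also have "\<dots> \<le> (\<Prod>j<m. expectation (\<lambda>w. \<phi> (cnt Phi w (D j)))) * expectation (\<lambda>w. \<phi> (cnt Phi w (D m)))"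
    using Suc.IH[OF disjoint_family_on_mono[OF _ Suc.prems(1)]] Suc.prems(2) \<phi>(2)
    by (intro mult_right_mono integral_nonneg_AE) auto
  finally show ?case by simp
qed

lemma associated_cov_ge:
  assumes "associated M Phi" "\<And>i. i < k \<Longrightarrow> bdd_borel (B i)"
    and "depends_on k f" "incr_on k f" "continuous_on UNIV f" "\<And>x. 0 \<le> f x \<and> f x \<le> 1"
    and "depends_on k g" "incr_on k g" "continuous_on UNIV g" "\<And>x. 0 \<le> g x \<and> g x \<le> 1"
  shows "0 \<le> cov M (\<lambda>w. f (cnt_vec Phi w k B)) (\<lambda>w. g (cnt_vec Phi w k B))"
  using assms(1)[unfolded associated_def, rule_format, of k B f g] assms(2-) by blast

lemma associated_cov_prod_ge:
  fixes \<phi> :: "real \<Rightarrow> real" and m :: nat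
  assumes a: "associated M Phi" and D: "\<And>j. j \<le> m \<Longrightarrow> bdd_borel (D j)"
    and \<phi>: "continuous_on UNIV \<phi>" "\<And>t. 0 \<le> \<phi> t \<and> \<phi> t \<le> 1" "mono \<phi> \<or> antimono \<phi>"
  shows "0 \<le> cov M (\<lambda>w. \<Prod>j<m. \<phi> (cnt Phi w (D j))) (\<lambda>w. \<phi> (cnt Phi w (D m)))"
proof -
  define F where "F = (\<lambda>w. \<Prod>j<m. \<phi> (cnt Phi w (D j)))"
  define G where "G = (\<lambda>w. \<phi> (cnt Phi w (D m)))"
  have FG: "F = (\<lambda>w. (\<lambda>x. \<Prod>j<m. \<phi> (x j)) (cnt_vec Phi w (Suc m) D))"
    "G = (\<lambda>w. (\<lambda>x. \<phi> (x m)) (cnt_vec Phi w (Suc m) D))"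
    by (simp_all add: F_def G_def cnt_vec_def)
  have B: "\<And>i. i < Suc m \<Longrightarrow> bdd_borel (D i)" using D by simp
  have last: "depends_on (Suc m) (\<lambda>x. h (\<phi> (x m)))" for h
    by (simp add: depends_on_def)
  have cont: "continuous_on UNIV (\<lambda>x::nat \<Rightarrow> real. \<phi> (x m))"
    using continuous_on_prod_coordinates[OF \<phi>(1), of "{m}"] by simp
  have bounds: "0 \<le> (\<Prod>j<m. \<phi> (x j))" "(\<Prod>j<m. \<phi> (x j)) \<le> 1" for x
    by (rule prod_unit_interval[of \<phi>, OF \<phi>(2)])+
  have "0 \<le> cov M F G"
    using \<phi>(3)
  proof
    assume "mono \<phi>"
    then have "0 \<le> cov M (\<lambda>w. (\<lambda>x. \<Prod>j<m. \<phi> (x j)) (cnt_vec Phi w (Suc m) D))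
        (\<lambda>w. (\<lambda>x. \<phi> (x m)) (cnt_vec Phi w (Suc m) D))"
      using B \<phi> bounds cont last[of "\<lambda>t. t"]
      by (intro associated_cov_ge[OF a] incr_on_prod depends_on_prod continuous_on_prod_coordinates)
        (auto simp: incr_on_def mono_def)
    then show ?thesis by (simp only: FG)
  next
    assume "antimono \<phi>"
    have "continuous_on UNIV (\<lambda>x. 1 - (\<Prod>j<m. \<phi> (x j)))" "continuous_on UNIV (\<lambda>x. 1 - \<phi> (x m))"
      using cont by (intro continuous_on_diff continuous_on_const continuous_on_prod_coordinates \<phi>(1))+
    with \<open>antimono \<phi>\<close> have "0 \<le> cov M (\<lambda>w. (\<lambda>x. 1 - (\<Prod>j<m. \<phi> (x j))) (cnt_vec Phi w (Suc m) D))
        (\<lambda>w. (\<lambda>x. 1 - \<phi> (x m)) (cnt_vec Phi w (Suc m) D))"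
      using B \<phi> bounds last[of "\<lambda>t. 1 - t"]
      by (intro associated_cov_ge[OF a] incr_on_one_minus_prod depends_on_prod)
        (auto simp: incr_on_def antimono_def)
    then have "0 \<le> cov M (\<lambda>w. 1 - F w) (\<lambda>w. 1 - G w)" by (simp only: FG)
    moreover have "cov M (\<lambda>w. 1 - F w) (\<lambda>w. 1 - G w) = cov M F G"
      unfolding F_def G_def by (rule cov_one_minus_prod_cnt[OF D \<phi>(1,2)])
    ultimately show ?thesis by simp
  qed
  then show ?thesis by (simp only: F_def G_def)
qed

lemma associated_expectation_prod_ge:
  fixes \<phi> :: "real \<Rightarrow> real" and m :: nat
  assumes a: "associated M Phi" and D: "\<And>j. j < m \<Longrightarrow> bdd_borel (D j)"
    and \<phi>: "continuous_on UNIV \<phi>" "\<And>t. 0 \<le> \<phi> t \<and> \<phi> t \<le> 1" "mono \<phi> \<or> antimono \<phi>"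
  shows "(\<Prod>j<m. expectation (\<lambda>w. \<phi> (cnt Phi w (D j)))) \<le> expectation (\<lambda>w. \<Prod>j<m. \<phi> (cnt Phi w (D j)))"
  using D
proof (induction m)
  case 0
  then show ?case by (simp add: prob_space)
next
  case (Suc m)
  have "(\<Prod>j<Suc m. expectation (\<lambda>w. \<phi> (cnt Phi w (D j))))
      \<le> expectation (\<lambda>w. \<Prod>j<m. \<phi> (cnt Phi w (D j))) * expectation (\<lambda>w. \<phi> (cnt Phi w (D m)))"
    using Suc \<phi>(2) by (simp, intro mult_right_mono integral_nonneg_AE) auto
  also have "\<dots> \<le> expectation (\<lambda>w. \<Prod>j<Suc m. \<phi> (cnt Phi w (D j)))"
    using associated_cov_prod_ge[OF a _ \<phi>, where D = D and m = m] Suc.prems by (simp add: cov_def)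
  finally show ?case .
qed

section \<open>Void probabilities\<close>

lemma prob_void_le_exp_sum_clip:
  fixes m :: nat
  assumes na: "neg_associated M Phi"
    and D: "disjoint_family_on D {..<m}" "\<And>j. j < m \<Longrightarrow> bdd_borel (D j)"
  shows "prob {w \<in> space M. emeasure (Phi w) (\<Union>j<m. D j) = 0}
           \<le> exp (- expectation (\<lambda>w. \<Sum>j<m. clip (cnt Phi w (D j))))"
proof -
  define e where "e j = expectation (\<lambda>w. clip (cnt Phi w (D j)))" for j
  have "prob {w \<in> space M. emeasure (Phi w) (\<Union>j<m. D j) = 0}
      = expectation (\<lambda>w. \<Prod>j<m. vacancy (cnt Phi w (D j)))"
    using D by (simp add: prob_void_eq_expectation_vacancy bdd_borel_UN vacancy_cnt_UN_disjoint
        cong: Bochner_Integration.integral_cong)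
  also have "\<dots> \<le> (\<Prod>j<m. expectation (\<lambda>w. vacancy (cnt Phi w (D j))))"
    using D by (intro neg_associated_expectation_prod_le[OF na])
      (auto simp: continuous_on_vacancy vacancy_bounds antimono_vacancy)
  also have "\<dots> = (\<Prod>j<m. 1 - e j)"
    using D(2) by (simp add: e_def expectation_vacancy_cnt)
  also have "\<dots> \<le> (\<Prod>j<m. exp (- e j))"
  proof (rule prod_mono)
    fix j assume "j \<in> {..<m}"
    then have "0 \<le> expectation (\<lambda>w. vacancy (cnt Phi w (D j)))" "bdd_borel (D j)"
      using D(2) by (auto intro!: integral_nonneg_AE simp: vacancy_bounds)
    then show "0 \<le> 1 - e j \<and> 1 - e j \<le> exp (- e j)"
      using exp_ge_add_one_self[of "- e j"] by (simp add: e_def expectation_vacancy_cnt)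
  qed
  also have "\<dots> = exp (- (\<Sum>j<m. e j))"
    by (simp only: sum_negf[symmetric] exp_sum[OF finite_lessThan])
  also have "(\<Sum>j<m. e j) = expectation (\<lambda>w. \<Sum>j<m. clip (cnt Phi w (D j)))"
    using D(2) unfolding e_def by (simp add: integrable_comp_cnt continuous_on_clip clip_bounds)
  finally show ?thesis .
qed

lemma simple_cnt_Int_small_ball_le_1:
  assumes B: "bdd_borel B" and w: "w \<in> space M" and simple: "\<forall>x. emeasure (Phi w) {x} \<le> 1"
  shows "\<exists>\<delta>>0. \<forall>y\<in>closure B. cnt Phi w (B \<inter> ball y \<delta>) \<le> 1"
proof (rule uniform_radius)
  show "compact (closure B)" using B by (simp add: bdd_borel_def compact_closure)
  show "cnt Phi w (B \<inter> ball y s) \<le> 1" if "cnt Phi w (B \<inter> ball x r) \<le> 1" "ball y s \<subseteq> ball x r" for x r y s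
  proof -
    have "cnt Phi w (B \<inter> ball y s) \<le> cnt Phi w (B \<inter> ball x r)"
      using that(2) B w by (intro cnt_mono) (auto simp: bdd_borel_Int bdd_borel_def)
    with that(1) show ?thesis by linarith
  qed
next
  fix x
  have "cnt Phi w (B \<inter> {x}) \<le> cnt Phi w {x}"
    using B w by (intro cnt_mono) (auto simp: bdd_borel_def)
  also have "\<dots> \<le> 1"
    using simple w by (metis bdd_borel_def borel_singleton emeasure_Phi_eq_cnt ennreal_le_1 bounded_insert bounded_empty sets.empty_sets)
  finally have "cnt Phi w (B \<inter> {x}) < 2" by simp
  from order_tendstoD(2)[OF cnt_Int_ball_tendsto[OF B w] this]
  obtain n where "cnt Phi w (B \<inter> ball x (inverse (real (Suc n)))) < 2"
    by (auto simp: eventually_sequentially)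
  moreover have "cnt Phi w (B \<inter> ball x (inverse (real (Suc n)))) \<in> \<nat>"
    using B w by (simp add: cnt_in_Nats bdd_borel_Int)
  ultimately show "\<exists>r>0. cnt Phi w (B \<inter> ball x r) \<le> 1"
    by (intro exI[of _ "inverse (real (Suc n))"]) (auto elim!: Nats_cases)
qed

lemma simple_sum_clip_cnt_tendsto:
  assumes B: "bdd_borel B" and w: "w \<in> space M" and simple: "\<forall>x. emeasure (Phi w) {x} \<le> 1"
    and P: "\<And>n. ball_partition B (inverse (real (Suc n))) (m n) (c n) (D n)"
  shows "(\<lambda>n. \<Sum>j<m n. clip (cnt Phi w (D n j))) \<longlonglongrightarrow> cnt Phi w B"
proof -
  obtain \<delta> where \<delta>: "0 < \<delta>" "\<And>y. y \<in> closure B \<Longrightarrow> cnt Phi w (B \<inter> ball y \<delta>) \<le> 1"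
    using simple_cnt_Int_small_ball_le_1[OF B w simple] by blast
  obtain N where N: "inverse (real (Suc N)) < \<delta>"
    using reals_Archimedean[OF \<delta>(1)] by blast
  have "(\<Sum>j<m n. clip (cnt Phi w (D n j))) = cnt Phi w B" if "N \<le> n" for n
  proof -
    have Dn: "\<And>j. j < m n \<Longrightarrow> bdd_borel (D n j)"
      using ball_partition_bdd_borel[OF B P] .
    have "cnt Phi w (D n j) \<le> 1" if j: "j < m n" for j
    proof -
      have "inverse (real (Suc n)) \<le> inverse (real (Suc N))"
        using \<open>N \<le> n\<close> by (simp add: le_imp_inverse_le)
      then have "ball (c n j) (inverse (real (Suc n))) \<subseteq> ball (c n j) \<delta>"
        using N by (intro subset_ball) linarith
      then have "D n j \<subseteq> B \<inter> ball (c n j) \<delta>" "c n j \<in> closure B"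
        using P[of n] j unfolding ball_partition_def by blast+
      then show ?thesis
        using \<delta>(2) cnt_mono[of "B \<inter> ball (c n j) \<delta>" "D n j" w] B w Dn[OF j]
        by (force simp: bdd_borel_Int bdd_borel_def)
    qed
    then have "(\<Sum>j<m n. clip (cnt Phi w (D n j))) = (\<Sum>j<m n. cnt Phi w (D n j))"
      by (intro sum.cong) (auto simp: clip_def)
    also have "\<dots> = cnt Phi w B"
      using cnt_ball_partition[OF B P w] ..
    finally show ?thesis .
  qed
  then show ?thesis
    by (intro tendsto_eventually eventually_sequentiallyI)
qed

lemma simple_expectation_sum_clip_tendsto:
  assumes simple: "simple_pp M Phi" and r: "radon_mean M Phi" and B: "bdd_borel B"
    and P: "\<And>n. ball_partition B (inverse (real (Suc n))) (m n) (c n) (D n)"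
  shows "(\<lambda>n. expectation (\<lambda>w. \<Sum>j<m n. clip (cnt Phi w (D n j)))) \<longlonglongrightarrow> expectation (\<lambda>w. cnt Phi w B)"
proof (rule integral_dominated_convergence[where w = "\<lambda>w. cnt Phi w B"])
  have clip: "clip \<in> borel_measurable borel"
    by (rule borel_measurable_continuous_onI[OF continuous_on_clip])
  show "(\<lambda>w. \<Sum>j<m n. clip (cnt Phi w (D n j))) \<in> borel_measurable M" for n
    using ball_partition_bdd_borel[OF B P]
    by (intro borel_measurable_sum) (auto intro: measurable_compose[OF borel_measurable_cnt clip])
  show "(\<lambda>w. cnt Phi w B) \<in> borel_measurable M" "integrable M (\<lambda>w. cnt Phi w B)"
    using B r by (simp_all add: integrable_cnt)
  show "AE w in M. (\<lambda>n. \<Sum>j<m n. clip (cnt Phi w (D n j))) \<longlonglongrightarrow> cnt Phi w B"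
    using simple unfolding simple_pp_def
    by (rule AE_mp) (auto intro!: AE_I2 simple_sum_clip_cnt_tendsto[OF B _ _ P])
  show "AE w in M. norm (\<Sum>j<m n. clip (cnt Phi w (D n j))) \<le> cnt Phi w B" for n
  proof (rule AE_I2)
    fix w assume w: "w \<in> space M"
    have "(\<Sum>j<m n. clip (cnt Phi w (D n j))) \<le> (\<Sum>j<m n. cnt Phi w (D n j))"
      by (intro sum_mono) (simp add: clip_def)
    then show "norm (\<Sum>j<m n. clip (cnt Phi w (D n j))) \<le> cnt Phi w B"
      using cnt_ball_partition[OF B P w] by (simp add: sum_nonneg clip_bounds)
  qed
qed

lemma nu_weakly_sub_if_neg_associated:
  assumes na: "neg_associated M Phi" and simple: "simple_pp M Phi" and r: "radon_mean M Phi"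
  shows "nu_weakly_sub M Phi"
  unfolding nu_weakly_sub_def
proof (intro allI impI)
  fix B :: "'a set" assume B: "bdd_borel B"
  have "\<forall>n. \<exists>m c D. ball_partition B (inverse (real (Suc n))) m c D"
    using B by (auto simp: bdd_borel_def intro!: ball_partition_exists)
  then obtain m c D where P: "\<And>n. ball_partition B (inverse (real (Suc n))) (m n) (c n) (D n)"
    by metis
  have "prob {w \<in> space M. emeasure (Phi w) B = 0}
      \<le> exp (- expectation (\<lambda>w. \<Sum>j<m n. clip (cnt Phi w (D n j))))" for n
    using prob_void_le_exp_sum_clip[OF na, of "D n" "m n"] P[of n] ball_partition_bdd_borel[OF B P]
    unfolding ball_partition_def by auto
  moreover have "(\<lambda>n. exp (- expectation (\<lambda>w. \<Sum>j<m n. clip (cnt Phi w (D n j)))))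
      \<longlonglongrightarrow> exp (- expectation (\<lambda>w. cnt Phi w B))"
    by (intro tendsto_intros simple_expectation_sum_clip_tendsto[OF simple r B P])
  ultimately show "prob {w \<in> space M. emeasure (Phi w) B = 0} \<le> exp (- enn2real (mean_measure M Phi B))"
    using enn2real_mean_measure[OF r B] by (simp add: LIMSEQ_le_const)
qed

lemma diffuse_uniform_small_balls:
  assumes r: "radon_mean M Phi" and df: "diffuse_mean M Phi" and B: "bdd_borel B" and "0 < \<epsilon>"
  shows "\<exists>\<delta>>0. \<forall>y\<in>closure B. expectation (\<lambda>w. cnt Phi w (B \<inter> ball y \<delta>)) < \<epsilon>"
proof (rule uniform_radius)
  show "compact (closure B)" using B by (simp add: bdd_borel_def compact_closure)
  show "expectation (\<lambda>w. cnt Phi w (B \<inter> ball y s)) < \<epsilon>"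
    if "expectation (\<lambda>w. cnt Phi w (B \<inter> ball x r)) < \<epsilon>" "ball y s \<subseteq> ball x r" for x r y s
  proof -
    have "expectation (\<lambda>w. cnt Phi w (B \<inter> ball y s)) \<le> expectation (\<lambda>w. cnt Phi w (B \<inter> ball x r))"
      using that(2) B r
      by (intro integral_mono integrable_cnt cnt_mono) (auto simp: bdd_borel_Int bdd_borel_def)
    with that(1) show ?thesis by linarith
  qed
next
  fix x
  have "expectation (\<lambda>w. cnt Phi w (B \<inter> {x})) \<le> expectation (\<lambda>w. cnt Phi w {x})"
    using B r by (intro integral_mono integrable_cnt cnt_mono) (auto simp: bdd_borel_def)
  also have "\<dots> = 0"
    using enn2real_mean_measure[OF r, of "{x}"] df by (simp add: diffuse_mean_def bdd_borel_def)
  finally have "expectation (\<lambda>w. cnt Phi w (B \<inter> {x})) < \<epsilon>" using \<open>0 < \<epsilon>\<close> by linarith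
  from order_tendstoD(2)[OF expectation_cnt_Int_ball_tendsto[OF r B] this]
  obtain n where "expectation (\<lambda>w. cnt Phi w (B \<inter> ball x (inverse (real (Suc n))))) < \<epsilon>"
    by (auto simp: eventually_sequentially)
  then show "\<exists>r>0. expectation (\<lambda>w. cnt Phi w (B \<inter> ball x r)) < \<epsilon>"
    by (intro exI[of _ "inverse (real (Suc n))"]) auto
qed

lemma exp_div_le_prob_void:
  fixes m :: nat
  assumes a: "associated M Phi" and r: "radon_mean M Phi"
    and D: "disjoint_family_on D {..<m}" "\<And>j. j < m \<Longrightarrow> bdd_borel (D j)"
    and small: "\<And>j. j < m \<Longrightarrow> expectation (\<lambda>w. cnt Phi w (D j)) \<le> \<epsilon>" and "\<epsilon> < 1"
  shows "exp (- expectation (\<lambda>w. cnt Phi w (\<Union>j<m. D j)) / (1 - \<epsilon>))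
           \<le> prob {w \<in> space M. emeasure (Phi w) (\<Union>j<m. D j) = 0}"
proof -
  define e where "e j = expectation (\<lambda>w. cnt Phi w (D j))" for j
  have e: "0 \<le> e j" "e j \<le> \<epsilon>" if "j < m" for j
    using small[OF that] unfolding e_def by (auto intro: integral_nonneg_AE)
  have "expectation (\<lambda>w. cnt Phi w (\<Union>j<m. D j)) = expectation (\<lambda>w. \<Sum>j<m. cnt Phi w (D j))"
    using D by (intro Bochner_Integration.integral_cong) (auto simp: cnt_UN_disjoint)
  also have "\<dots> = (\<Sum>j<m. e j)"
    using D(2) unfolding e_def by (simp add: integrable_cnt[OF r])
  finally have "exp (- expectation (\<lambda>w. cnt Phi w (\<Union>j<m. D j)) / (1 - \<epsilon>)) = (\<Prod>j<m. exp (- e j / (1 - \<epsilon>)))"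
    by (simp add: sum_divide_distrib flip: sum_negf exp_sum)
  also have "\<dots> \<le> (\<Prod>j<m. 1 - e j)"
    using e \<open>\<epsilon> < 1\<close> by (intro prod_mono conjI exp_ge_zero exp_neg_div_le_one_minus) auto
  also have "\<dots> \<le> (\<Prod>j<m. expectation (\<lambda>w. vacancy (cnt Phi w (D j))))"
    using e \<open>\<epsilon> < 1\<close> D(2) expectation_vacancy_ge[OF r] unfolding e_def
    by (intro prod_mono) force
  also have "\<dots> \<le> expectation (\<lambda>w. \<Prod>j<m. vacancy (cnt Phi w (D j)))"
    using D by (intro associated_expectation_prod_ge[OF a])
      (auto simp: continuous_on_vacancy vacancy_bounds antimono_vacancy)
  also have "\<dots> = prob {w \<in> space M. emeasure (Phi w) (\<Union>j<m. D j) = 0}"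
    using D by (simp add: prob_void_eq_expectation_vacancy bdd_borel_UN vacancy_cnt_UN_disjoint
        cong: Bochner_Integration.integral_cong)
  finally show ?thesis .
qed

lemma diffuse_exp_div_le_prob_void:
  assumes a: "associated M Phi" and r: "radon_mean M Phi" and df: "diffuse_mean M Phi"
    and B: "bdd_borel B" and "0 < \<epsilon>" "\<epsilon> < 1"
  shows "exp (- expectation (\<lambda>w. cnt Phi w B) / (1 - \<epsilon>)) \<le> prob {w \<in> space M. emeasure (Phi w) B = 0}"
proof -
  obtain \<delta> where \<delta>: "0 < \<delta>" "\<And>y. y \<in> closure B \<Longrightarrow> expectation (\<lambda>w. cnt Phi w (B \<inter> ball y \<delta>)) < \<epsilon>"
    using diffuse_uniform_small_balls[OF r df B \<open>0 < \<epsilon>\<close>] by blast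
  obtain m c D where P: "ball_partition B \<delta> m c D"
    using ball_partition_exists[of B \<delta>] B \<delta>(1) unfolding bdd_borel_def by blast
  have D: "\<And>j. j < m \<Longrightarrow> bdd_borel (D j)"
    using ball_partition_bdd_borel[OF B P] .
  have "expectation (\<lambda>w. cnt Phi w (D j)) \<le> \<epsilon>" if "j < m" for j
  proof -
    have "D j \<subseteq> B \<inter> ball (c j) \<delta>" "c j \<in> closure B"
      using P that unfolding ball_partition_def by auto
    then have "expectation (\<lambda>w. cnt Phi w (D j)) \<le> expectation (\<lambda>w. cnt Phi w (B \<inter> ball (c j) \<delta>))"
      using B D[OF that] r
      by (intro integral_mono integrable_cnt cnt_mono) (auto simp: bdd_borel_Int bdd_borel_def)
    with \<delta>(2)[OF \<open>c j \<in> closure B\<close>] show ?thesis by linarith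
  qed
  then show ?thesis
    using exp_div_le_prob_void[OF a r _ D, where \<epsilon> = \<epsilon>] P \<open>\<epsilon> < 1\<close> unfolding ball_partition_def by auto
qed

lemma nu_weakly_super_if_associated:
  assumes a: "associated M Phi" and r: "radon_mean M Phi" and df: "diffuse_mean M Phi"
  shows "nu_weakly_super M Phi"
  unfolding nu_weakly_super_def
proof (intro allI impI)
  fix B :: "'a set" assume B: "bdd_borel B"
  define \<mu> where "\<mu> = expectation (\<lambda>w. cnt Phi w B)"
  have "((\<lambda>\<epsilon>. exp (- \<mu> / (1 - \<epsilon>))) \<longlongrightarrow> exp (- \<mu> / (1 - 0))) (at_right 0)"
    by (intro tendsto_intros) auto
  moreover have "eventually (\<lambda>\<epsilon>. \<epsilon> \<in> {0<..<1}) (at_right (0::real))"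
    by (rule eventually_at_right_real) simp
  then have "eventually (\<lambda>\<epsilon>. exp (- \<mu> / (1 - \<epsilon>)) \<le> prob {w \<in> space M. emeasure (Phi w) B = 0}) (at_right 0)"
    by eventually_elim (use diffuse_exp_div_le_prob_void[OF a r df B] in \<open>auto simp: \<mu>_def\<close>)
  ultimately have "exp (- \<mu>) \<le> prob {w \<in> space M. emeasure (Phi w) B = 0}"
    by (intro tendsto_le[OF trivial_limit_at_right_real tendsto_const]) auto
  then show "exp (- enn2real (mean_measure M Phi B)) \<le> prob {w \<in> space M. emeasure (Phi w) B = 0}"
    using enn2real_mean_measure[OF r B] by (simp add: \<mu>_def)
qed

section \<open>Factorial moment measures\<close>

lemma nn_integral_prod_min_cnt:
  fixes I :: "nat set"
  assumes "finite I" "\<And>i. i \<in> I \<Longrightarrow> bdd_borel (B i)"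
  shows "(\<integral>\<^sup>+ w. ennreal (\<Prod>i\<in>I. min (real n) (cnt Phi w (B i))) \<partial>M)
    = ennreal (real n ^ card I * expectation (\<lambda>w. \<Prod>i\<in>I. clip (cnt Phi w (B i) / real n)))"
proof -
  define X where "X w = (\<Prod>i\<in>I. clip (cnt Phi w (B i) / real n))" for w
  have X: "0 \<le> X w" for w
    unfolding X_def by (intro prod_nonneg) (simp add: clip_bounds)
  have "integrable M X"
    unfolding X_def using assms(2) by (rule integrable_prod_cnt) (auto simp: continuous_on_clip_div clip_bounds)
  moreover have "(\<Prod>i\<in>I. min (real n) (cnt Phi w (B i))) = real n ^ card I * X w" for w
    by (simp add: X_def min_of_nat_eq_mult_clip prod.distrib)
  ultimately show ?thesis
    using X by (simp add: nn_integral_eq_integral flip: X_def)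
qed

lemma prod_nn_integral_min_cnt:
  fixes k :: nat
  assumes "\<And>i. i < k \<Longrightarrow> bdd_borel (B i)"
  shows "(\<Prod>i<k. \<integral>\<^sup>+ w. ennreal (min (real n) (cnt Phi w (B i))) \<partial>M)
    = ennreal (real n ^ k * (\<Prod>i<k. expectation (\<lambda>w. clip (cnt Phi w (B i) / real n))))"
proof -
  have "(\<Prod>i<k. \<integral>\<^sup>+ w. ennreal (min (real n) (cnt Phi w (B i))) \<partial>M)
      = (\<Prod>i<k. ennreal (real n * expectation (\<lambda>w. clip (cnt Phi w (B i) / real n))))"
    using nn_integral_prod_min_cnt[of "{i}" B n for i] assms by (intro prod.cong) auto
  also have "\<dots> = ennreal (real n ^ k * (\<Prod>i<k. expectation (\<lambda>w. clip (cnt Phi w (B i) / real n))))"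
    by (subst prod_ennreal) (auto intro!: integral_nonneg_AE simp: clip_bounds prod.distrib)
  finally show ?thesis .
qed

lemma nn_integral_prod_min_cnt_le:
  fixes k :: nat
  assumes na: "neg_associated M Phi"
    and B: "disjoint_family_on B {..<k}" "\<And>i. i < k \<Longrightarrow> bdd_borel (B i)"
  shows "(\<integral>\<^sup>+ w. ennreal (\<Prod>i<k. min (real n) (cnt Phi w (B i))) \<partial>M)
    \<le> (\<Prod>i<k. \<integral>\<^sup>+ w. ennreal (min (real n) (cnt Phi w (B i))) \<partial>M)"
proof -
  have "expectation (\<lambda>w. \<Prod>i<k. clip (cnt Phi w (B i) / real n))
      \<le> (\<Prod>i<k. expectation (\<lambda>w. clip (cnt Phi w (B i) / real n)))"
    using neg_associated_expectation_prod_le[OF na B, where \<phi> = "\<lambda>t. clip (t / real n)"]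
    by (simp add: continuous_on_clip_div clip_bounds mono_clip_div)
  moreover have "(\<integral>\<^sup>+ w. ennreal (\<Prod>i<k. min (real n) (cnt Phi w (B i))) \<partial>M)
      = ennreal (real n ^ k * expectation (\<lambda>w. \<Prod>i<k. clip (cnt Phi w (B i) / real n)))"
    using B by (subst nn_integral_prod_min_cnt) auto
  ultimately show ?thesis
    using B by (simp add: prod_nn_integral_min_cnt ennreal_leI mult_left_mono)
qed

lemma nn_integral_prod_min_cnt_ge:
  fixes k :: nat
  assumes a: "associated M Phi" and B: "\<And>i. i < k \<Longrightarrow> bdd_borel (B i)"
  shows "(\<Prod>i<k. \<integral>\<^sup>+ w. ennreal (min (real n) (cnt Phi w (B i))) \<partial>M)
    \<le> (\<integral>\<^sup>+ w. ennreal (\<Prod>i<k. min (real n) (cnt Phi w (B i))) \<partial>M)"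
proof -
  have "(\<Prod>i<k. expectation (\<lambda>w. clip (cnt Phi w (B i) / real n)))
      \<le> expectation (\<lambda>w. \<Prod>i<k. clip (cnt Phi w (B i) / real n))"
    using associated_expectation_prod_ge[OF a B, where \<phi> = "\<lambda>t. clip (t / real n)"]
    by (simp add: continuous_on_clip_div clip_bounds mono_clip_div)
  moreover have "(\<integral>\<^sup>+ w. ennreal (\<Prod>i<k. min (real n) (cnt Phi w (B i))) \<partial>M)
      = ennreal (real n ^ k * expectation (\<lambda>w. \<Prod>i<k. clip (cnt Phi w (B i) / real n)))"
    using B by (subst nn_integral_prod_min_cnt) auto
  ultimately show ?thesis
    using B by (simp add: prod_nn_integral_min_cnt ennreal_leI mult_left_mono)
qed

lemma mean_measure_eq_SUP_min:
  assumes "bdd_borel B"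
  shows "mean_measure M Phi B = (SUP n. \<integral>\<^sup>+ w. ennreal (min (real n) (cnt Phi w B)) \<partial>M)"
proof -
  have "mean_measure M Phi B = (\<integral>\<^sup>+ w. (SUP n. ennreal (min (real n) (cnt Phi w B))) \<partial>M)"
    using assms by (simp add: mean_measure_eq_nn_integral SUP_min_of_nat_ennreal)
  also have "\<dots> = (SUP n. \<integral>\<^sup>+ w. ennreal (min (real n) (cnt Phi w B)) \<partial>M)"
    using assms by (intro nn_integral_monotone_convergence_SUP) (auto simp: incseq_def le_fun_def intro!: ennreal_leI)
  finally show ?thesis .
qed

lemma fact_moment_eq_SUP_min:
  fixes k :: nat
  assumes B: "\<And>i. i < k \<Longrightarrow> bdd_borel (B i)"
  shows "fact_moment M Phi k B = (SUP n. \<integral>\<^sup>+ w. ennreal (\<Prod>i<k. min (real n) (cnt Phi w (B i))) \<partial>M)"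
proof -
  have "fact_moment M Phi k B = (\<integral>\<^sup>+ w. (\<Prod>i<k. SUP n. ennreal (min (real n) (cnt Phi w (B i)))) \<partial>M)"
    unfolding fact_moment_def using B
    by (intro nn_integral_cong prod.cong) (auto simp: emeasure_Phi_eq_cnt SUP_min_of_nat_ennreal)
  also have "\<dots> = (\<integral>\<^sup>+ w. (SUP n. ennreal (\<Prod>i<k. min (real n) (cnt Phi w (B i)))) \<partial>M)"
    by (simp add: prod_SUP_incseq_ennreal incseq_min_of_nat_ennreal prod_ennreal)
  also have "\<dots> = (SUP n. \<integral>\<^sup>+ w. ennreal (\<Prod>i<k. min (real n) (cnt Phi w (B i))) \<partial>M)"
    using B by (intro nn_integral_monotone_convergence_SUP)
      (auto simp: incseq_def le_fun_def intro!: ennreal_leI prod_mono)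
  finally show ?thesis .
qed

lemma prod_mean_measure_eq_SUP_min:
  fixes k :: nat
  assumes B: "\<And>i. i < k \<Longrightarrow> bdd_borel (B i)"
  shows "(\<Prod>i<k. mean_measure M Phi (B i)) = (SUP n. \<Prod>i<k. \<integral>\<^sup>+ w. ennreal (min (real n) (cnt Phi w (B i))) \<partial>M)"
proof -
  have "(\<Prod>i<k. mean_measure M Phi (B i)) = (\<Prod>i<k. SUP n. \<integral>\<^sup>+ w. ennreal (min (real n) (cnt Phi w (B i))) \<partial>M)"
    using B by (intro prod.cong) (auto simp: mean_measure_eq_SUP_min)
  also have "\<dots> = (SUP n. \<Prod>i<k. \<integral>\<^sup>+ w. ennreal (min (real n) (cnt Phi w (B i))) \<partial>M)"
    by (intro prod_SUP_incseq_ennreal) (auto simp: incseq_def intro!: nn_integral_mono ennreal_leI)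
  finally show ?thesis .
qed

lemma alpha_weakly_sub_if_neg_associated:
  assumes na: "neg_associated M Phi"
  shows "alpha_weakly_sub M Phi"
  unfolding alpha_weakly_sub_def
  by (auto simp: fact_moment_eq_SUP_min prod_mean_measure_eq_SUP_min
      intro!: SUP_mono' nn_integral_prod_min_cnt_le[OF na])

lemma alpha_weakly_super_if_associated:
  assumes a: "associated M Phi"
  shows "alpha_weakly_super M Phi"
  unfolding alpha_weakly_super_def
  by (auto simp: fact_moment_eq_SUP_min prod_mean_measure_eq_SUP_min
      intro!: SUP_mono' nn_integral_prod_min_cnt_ge[OF a])

end

theorem corollary3p2:
  fixes M :: "'w measure" and Phi :: "'w \<Rightarrow> 'a::euclidean_space measure"
  assumes "point_process M Phi"
  shows "(neg_associated M Phi \<and> simple_pp M Phi \<and> radon_mean M Phi \<longrightarrow> weakly_sub_poisson M Phi)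
       \<and> (associated M Phi \<and> radon_mean M Phi \<and> diffuse_mean M Phi \<longrightarrow> weakly_super_poisson M Phi)"
proof -
  interpret point_process_space M Phi using assms by unfold_locales
  show ?thesis
    unfolding weakly_sub_poisson_def weakly_super_poisson_def
    using nu_weakly_sub_if_neg_associated alpha_weakly_sub_if_neg_associated
      nu_weakly_super_if_associated alpha_weakly_super_if_associated by blast
qed

end
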